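(* In the setting of the context, suppose $x_1,\dots,x_n$ are in general position, $d\ge K_*$ and $0<T\le e^{c_*d/2}$. For $x_0\in\mathbb{R}^d$ let $X_t(x_0)$ solve $\mathrm{d}X_t=\hat s(X_t)\,\mathrm{d}t+\sqrt2\,\mathrm{d}B_t$, $X_0=x_0$, and let $\tau(x_0)=\inf\{t\ge0:\|X_t(x_0)-x_0\|\ge0.15\sqrt d\}$. Then for every $1\le i\le n$, $\mathbb{P}(\tau(x_i)>T)\ge1-3\alpha e^{-c_*d}$.
   Context: $c_*>0$, $K_*>0$, $\alpha_*\ge1$ are universal constants such that: whenever $d\ge K_*$, $0<T\le e^{c_*d/2}$, $\alpha\ge\alpha_*$ and $B$ is a standard Brownian motion in $\mathbb{R}^d$, $\mathbb{P}(\sup_{t\in[0,T]}\|\int_0^t e^{-\alpha(t-s)}\mathrm{d}B_s\|>0.1\sqrt d)\le 3\alpha e^{-c_*d}$. Set $\alpha=\alpha_*$. Points $x_1,\dots,x_n\in\mathbb{R}^d$ are in general position if $\|x_i-x_j\|\ge0.4\sqrt d$ for all $i\ne j$ and $0.5\sqrt d\le\|x_i\|\le2\sqrt d$ for all $i$; then any $x$ with $\|x-x_i\|<0.2\sqrt d$ for some $i$ has that $i$ unique. $\rho:\mathbb{R}\to[0,1]$ is a fixed smooth function with $\rho(r)=1$ for $r\le4$, $\rho(r)=0$ for $r\ge5$, $|\rho'|\le H$ (universal). The score estimate is $\hat s(x)=-\alpha(x-x_i)$ if $\|x-x_i\|\le0.15\sqrt d$ for some $i$; $\hat s(x)=-x$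 if $\|x-x_i\|\ge0.16\sqrt d$ for all $i$; and otherwise, with $i$ the unique index with $0.15\sqrt d<\|x-x_i\|<0.16\sqrt d$ and $w=\rho(100\|x-x_i\|/\sqrt d-11)$, $\hat s(x)=-w\,\alpha(x-x_i)-(1-w)x$. $B$ is a standard $d$-dimensional Brownian motion. *)

theory Defs
  imports "HOL-Probability.Probability"
begin

text \<open>Standard Brownian motion in R^d (d = CARD('n)), on a probability space M.\<close>
definition std_BM :: "'a measure \<Rightarrow> (real \<Rightarrow> 'a \<Rightarrow> real ^ 'n) \<Rightarrow> bool" where
  "std_BM M B \<longleftrightarrow> prob_space M \<and>
     (\<forall>t\<ge>0. B t \<in> borel_measurable M) \<and>
     (\<forall>\<omega>\<in>space M. B 0 \<omega> = 0 \<and> continuous_on {0..} (\<lambda>t. B t \<omega>)) \<and>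
     (\<forall>s t. 0 \<le> s \<and> s < t \<longrightarrow>
        (\<forall>i. distributed M lborel (\<lambda>\<omega>. (B t \<omega> - B s \<omega>) $ i)
               (\<lambda>x. ennreal (normal_density 0 (sqrt (t - s)) x))) \<and>
        prob_space.indep_vars M (\<lambda>_. borel) (\<lambda>i \<omega>. (B t \<omega> - B s \<omega>) $ i) UNIV) \<and>
     (\<forall>ts. sorted ts \<and> (\<forall>t\<in>set ts. 0 \<le> t) \<longrightarrow>
        prob_space.indep_vars M (\<lambda>_. borel)
          (\<lambda>j \<omega>. B (ts ! Suc j) \<omega> - B (ts ! j) \<omega>) {..<length ts - 1})"

text \<open>The Wiener integral int_0^t exp(-alpha(t-s)) dB_s, written pathwise via
  integration by parts: B_t - alpha * int_0^t exp(-alpha(t-s)) B_s ds.\<close>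
definition ou_integral :: "real \<Rightarrow> (real \<Rightarrow> 'a \<Rightarrow> real ^ 'n) \<Rightarrow> real \<Rightarrow> 'a \<Rightarrow> real ^ 'n" where
  "ou_integral \<alpha> B t \<omega> =
     B t \<omega> - \<alpha> *\<^sub>R integral {0..t} (\<lambda>s. exp (-\<alpha> * (t - s)) *\<^sub>R B s \<omega>)"

definition general_position :: "nat \<Rightarrow> (nat \<Rightarrow> real ^ 'n) \<Rightarrow> bool" where
  "general_position n x \<longleftrightarrow>
     (\<forall>i\<in>{1..n}. \<forall>j\<in>{1..n}. i \<noteq> j \<longrightarrow> dist (x i) (x j) \<ge> 0.4 * sqrt (real CARD('n))) \<and>
     (\<forall>i\<in>{1..n}. 0.5 * sqrt (real CARD('n)) \<le> norm (x i) \<and> norm (x i) \<le> 2 * sqrt (real CARD('n)))"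

definition score_est :: "real \<Rightarrow> (real \<Rightarrow> real) \<Rightarrow> nat \<Rightarrow> (nat \<Rightarrow> real ^ 'n) \<Rightarrow> real ^ 'n \<Rightarrow> real ^ 'n" where
  "score_est \<alpha> \<rho> n x y =
     (let sd = sqrt (real CARD('n)) in
      if \<exists>i\<in>{1..n}. norm (y - x i) \<le> 0.15 * sd then
        (let i = (SOME i. i \<in> {1..n} \<and> norm (y - x i) \<le> 0.15 * sd) in - (\<alpha> *\<^sub>R (y - x i)))
      else if \<forall>i\<in>{1..n}. norm (y - x i) \<ge> 0.16 * sd then - y
      else
        (let i = (SOME i. i \<in> {1..n} \<and> 0.15 * sd < norm (y - x i) \<and> norm (y - x i) < 0.16 * sd);
             w = \<rho> (100 * norm (y - x i) / sd - 11)
         in - ((w * \<alpha>) *\<^sub>R (y - x i)) - (1 - w) *\<^sub>R y))"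

text \<open>Exit time tau(x0) = inf {t >= 0 : |X_t - x0| >= 0.15 sqrt d}, as an extended real
  (inf of the empty set is +infinity).\<close>
definition exit_time :: "(real \<Rightarrow> 'a \<Rightarrow> real ^ 'n) \<Rightarrow> real ^ 'n \<Rightarrow> 'a \<Rightarrow> ereal" where
  "exit_time X x0 \<omega> =
     Inf {ereal t | t. 0 \<le> t \<and> norm (X t \<omega> - x0) \<ge> 0.15 * sqrt (real CARD('n))}"

end

theory Submission
  imports Defs
begin

(* Started at x_i, the process feels the drift -alpha (X - x_i) for as long as it stays within
   0.15 sqrt d of x_i, because general position makes x_i the only centre that close.  Up to the
   exit time, X - x_i therefore solves the same linear integral equation as sqrt 2 times the
   Ornstein-Uhlenbeck integral of B, and by uniqueness (integrating factor) coincides with it.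
   Hence the exit time exceeds T as soon as sqrt 2 |OU_t| < 0.15 sqrt d on [0, T], which holds
   whenever |OU_t| <= 0.1 sqrt d on [0, T]; the assumed bound on the Ornstein-Uhlenbeck
   supremum gives the probability. *)

section \<open>Events defined by continuous processes\<close>

lemma continuous_on_le_of_dense:
  fixes f :: "'a::first_countable_topology \<Rightarrow> real"
  assumes f: "continuous_on S f" and D: "D \<subseteq> S" "S \<subseteq> closure D"
    and le: "\<And>q. q \<in> D \<Longrightarrow> f q \<le> r" and t: "t \<in> S"
  shows "f t \<le> r"
proof -
  obtain q where q: "\<And>k. q k \<in> D" "q \<longlonglongrightarrow> t"
    using D(2) t closure_sequential by blast
  have "(\<lambda>k. f (q k)) \<longlonglongrightarrow> f t"
    using q D(1) by (intro continuous_on_tendsto_compose[OF f _ t] always_eventually) auto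
  then show ?thesis
    using q(1) le by (intro LIMSEQ_le_const2) auto
qed

lemma sets_Collect_forall_le_continuous:
  fixes g :: "'b::{metric_space, second_countable_topology} \<Rightarrow> 'a \<Rightarrow> real"
  assumes meas: "\<And>t. t \<in> S \<Longrightarrow> g t \<in> borel_measurable M"
    and cont: "\<And>\<omega>. \<omega> \<in> space M \<Longrightarrow> continuous_on S (\<lambda>t. g t \<omega>)"
  shows "{\<omega> \<in> space M. \<forall>t\<in>S. g t \<omega> \<le> r} \<in> sets M"
proof -
  obtain D where D: "countable D" "D \<subseteq> S" "S \<subseteq> closure D"
    using separable by blast
  have "{\<omega> \<in> space M. \<forall>t\<in>S. g t \<omega> \<le> r} = {\<omega> \<in> space M. \<forall>q\<in>D. g q \<omega> \<le> r}"
    using D(2) continuous_on_le_of_dense[OF cont D(2,3)] by blast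
  also have "\<dots> \<in> sets M"
  proof (rule sets.sets_Collect_countable_All'[OF _ D(1)])
    fix q assume "q \<in> D"
    then have [measurable]: "g q \<in> borel_measurable M" using D(2) meas by blast
    show "{\<omega> \<in> space M. g q \<omega> \<le> r} \<in> sets M" by measurable
  qed
  finally show ?thesis .
qed

lemma sets_Collect_exists_greater_continuous:
  fixes g :: "'b::{metric_space, second_countable_topology} \<Rightarrow> 'a \<Rightarrow> real"
  assumes "\<And>t. t \<in> S \<Longrightarrow> g t \<in> borel_measurable M"
    and "\<And>\<omega>. \<omega> \<in> space M \<Longrightarrow> continuous_on S (\<lambda>t. g t \<omega>)"
  shows "{\<omega> \<in> space M. \<exists>t\<in>S. g t \<omega> > r} \<in> sets M"
proof -
  have "{\<omega> \<in> space M. \<exists>t\<in>S. g t \<omega> > r} = space M - {\<omega> \<in> space M. \<forall>t\<in>S. g t \<omega> \<le> r}"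
    by (auto simp: not_le)
  then show ?thesis
    using sets_Collect_forall_le_continuous[OF assms] by auto
qed

lemma sets_Collect_forall_less_continuous:
  fixes g :: "'b::{metric_space, second_countable_topology} \<Rightarrow> 'a \<Rightarrow> real"
  assumes S: "compact S" and meas: "\<And>t. t \<in> S \<Longrightarrow> g t \<in> borel_measurable M"
    and cont: "\<And>\<omega>. \<omega> \<in> space M \<Longrightarrow> continuous_on S (\<lambda>t. g t \<omega>)"
  shows "{\<omega> \<in> space M. \<forall>t\<in>S. g t \<omega> < r} \<in> sets M"
proof -
  have "(\<forall>t\<in>S. g t \<omega> < r) \<longleftrightarrow> (\<exists>m::nat. \<forall>t\<in>S. g t \<omega> \<le> r - inverse (Suc m))"
    if \<omega>: "\<omega> \<in> space M" for \<omega>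
  proof
    assume less: "\<forall>t\<in>S. g t \<omega> < r"
    show "\<exists>m::nat. \<forall>t\<in>S. g t \<omega> \<le> r - inverse (Suc m)"
    proof (cases "S = {}")
      case False
      then obtain s where s: "s \<in> S" "\<And>t. t \<in> S \<Longrightarrow> g t \<omega> \<le> g s \<omega>"
        using continuous_attains_sup[OF S _ cont[OF \<omega>]] by blast
      then have "0 < r - g s \<omega>" using less by simp
      then obtain m :: nat where "inverse (Suc m) < r - g s \<omega>"
        using reals_Archimedean by blast
      then have "\<forall>t\<in>S. g t \<omega> \<le> r - inverse (Suc m)"
        using s(2) by fastforce
      then show ?thesis ..
    qed simp
  next
    assume "\<exists>m::nat. \<forall>t\<in>S. g t \<omega> \<le> r - inverse (Suc m)"
    then obtain m :: nat where m: "\<forall>t\<in>S. g t \<omega> \<le> r - inverse (Suc m)" ..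
    show "\<forall>t\<in>S. g t \<omega> < r"
    proof
      fix t assume "t \<in> S"
      then have "g t \<omega> \<le> r - inverse (Suc m)" using m by blast
      moreover have "0 < inverse (real (Suc m))" by simp
      ultimately show "g t \<omega> < r" by linarith
    qed
  qed
  then have "{\<omega> \<in> space M. \<forall>t\<in>S. g t \<omega> < r}
      = {\<omega> \<in> space M. \<exists>m::nat. \<forall>t\<in>S. g t \<omega> \<le> r - inverse (Suc m)}"
    by blast
  also have "\<dots> \<in> sets M"
    by (intro sets.sets_Collect_countable_Ex sets_Collect_forall_le_continuous meas cont)
  finally show ?thesis .
qed

section \<open>The Ornstein-Uhlenbeck integral\<close>

lemma floor_mult_div_tendsto:
  "(\<lambda>k. real_of_int \<lfloor>real (Suc k) * s\<rfloor> / real (Suc k)) \<longlonglongrightarrow> (s::real)"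
proof (rule tendsto_sandwich[where f="\<lambda>k. s - inverse (real (Suc k))" and h="\<lambda>k. s"])
  have "s - inverse (real (Suc k)) \<le> real_of_int \<lfloor>real (Suc k) * s\<rfloor> / real (Suc k)" for k
  proof -
    have "real (Suc k) * s - 1 \<le> real_of_int \<lfloor>real (Suc k) * s\<rfloor>" by linarith
    then have "(real (Suc k) * s - 1) / real (Suc k) \<le> real_of_int \<lfloor>real (Suc k) * s\<rfloor> / real (Suc k)"
      by (intro divide_right_mono) auto
    then show ?thesis by (simp add: field_simps)
  qed
  then show "\<forall>\<^sub>F k in sequentially. s - inverse (real (Suc k)) \<le> real_of_int \<lfloor>real (Suc k) * s\<rfloor> / real (Suc k)"
    by simp
  have "real_of_int \<lfloor>real (Suc k) * s\<rfloor> / real (Suc k) \<le> s" for k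
  proof -
    have "real_of_int \<lfloor>real (Suc k) * s\<rfloor> \<le> real (Suc k) * s" by linarith
    then show ?thesis by (simp add: field_simps)
  qed
  then show "\<forall>\<^sub>F k in sequentially. real_of_int \<lfloor>real (Suc k) * s\<rfloor> / real (Suc k) \<le> s"
    by simp
  show "(\<lambda>k. s - inverse (real (Suc k))) \<longlonglongrightarrow> s"
    using tendsto_diff[OF tendsto_const LIMSEQ_inverse_real_of_nat, of s] by simp
qed simp

lemma borel_measurable_continuous_process_uncurry:
  fixes B :: "real \<Rightarrow> 'a \<Rightarrow> 'b::metric_space"
  assumes meas: "\<And>t. t \<ge> 0 \<Longrightarrow> B t \<in> borel_measurable M"
    and cont: "\<And>\<omega>. \<omega> \<in> space M \<Longrightarrow> continuous_on {0..} (\<lambda>t. B t \<omega>)"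
  shows "(\<lambda>p. B (max 0 (snd p)) (fst p)) \<in> borel_measurable (M \<Otimes>\<^sub>M lborel)"
proof (rule borel_measurable_LIMSEQ_metric)
  fix k
  show "(\<lambda>p. B (max 0 (real_of_int \<lfloor>real (Suc k) * snd p\<rfloor> / real (Suc k))) (fst p))
      \<in> borel_measurable (M \<Otimes>\<^sub>M lborel)"
  proof (rule measurable_compose_countable[where f="\<lambda>j p. B (max 0 (real_of_int j / real (Suc k))) (fst p)"])
    show "(\<lambda>p. B (max 0 (real_of_int j / real (Suc k))) (fst p)) \<in> borel_measurable (M \<Otimes>\<^sub>M lborel)" for j :: int
      by (rule measurable_compose[OF measurable_fst meas]) simp
    show "(\<lambda>p. \<lfloor>real (Suc k) * snd p\<rfloor>) \<in> measurable (M \<Otimes>\<^sub>M lborel) (count_space UNIV)"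
      by (rule measurable_compose[OF _ measurable_real_floor]) measurable
  qed
next
  fix p :: "'a \<times> real" assume "p \<in> space (M \<Otimes>\<^sub>M lborel)"
  then have \<omega>: "fst p \<in> space M" by (auto simp: space_pair_measure)
  have "(\<lambda>k. max 0 (real_of_int \<lfloor>real (Suc k) * snd p\<rfloor> / real (Suc k))) \<longlonglongrightarrow> max 0 (snd p)"
    by (intro tendsto_max tendsto_const floor_mult_div_tendsto)
  then show "(\<lambda>k. B (max 0 (real_of_int \<lfloor>real (Suc k) * snd p\<rfloor> / real (Suc k))) (fst p))
      \<longlonglongrightarrow> B (max 0 (snd p)) (fst p)"
    by (rule continuous_on_tendsto_compose[OF cont[OF \<omega>]]) auto
qed

lemma borel_measurable_kernel_integral:
  fixes B :: "real \<Rightarrow> 'a \<Rightarrow> 'b::euclidean_space"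
  assumes meas: "\<And>t. t \<ge> 0 \<Longrightarrow> B t \<in> borel_measurable M"
    and cont: "\<And>\<omega>. \<omega> \<in> space M \<Longrightarrow> continuous_on {0..} (\<lambda>t. B t \<omega>)"
    and k: "continuous_on UNIV k"
  shows "(\<lambda>\<omega>. integral {0..t} (\<lambda>s. k s *\<^sub>R B s \<omega>)) \<in> borel_measurable M"
proof -
  have [measurable]: "(\<lambda>p. B (max 0 (snd p)) (fst p)) \<in> borel_measurable (M \<Otimes>\<^sub>M lborel)"
    by (rule borel_measurable_continuous_process_uncurry[OF meas cont])
  have [measurable]: "k \<in> borel_measurable borel"
    using k by (rule borel_measurable_continuous_onI)
  define F where "F \<omega> = (LINT s|lborel. indicator {0..t} s *\<^sub>R (k s *\<^sub>R B (max 0 s) \<omega>))" for \<omega>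
  have "(\<lambda>p. indicator {0..t} (snd p) *\<^sub>R (k (snd p) *\<^sub>R B (max 0 (snd p)) (fst p)))
      \<in> borel_measurable (M \<Otimes>\<^sub>M lborel)"
    by measurable
  then have "F \<in> borel_measurable M"
    unfolding F_def by (intro lborel.borel_measurable_lebesgue_integral) (simp add: case_prod_beta')
  moreover have "F \<omega> = integral {0..t} (\<lambda>s. k s *\<^sub>R B s \<omega>)" if \<omega>: "\<omega> \<in> space M" for \<omega>
  proof -
    have "continuous_on {0..t} (\<lambda>s. B (max 0 s) \<omega>)"
      by (rule continuous_on_eq[OF continuous_on_subset[OF cont[OF \<omega>]]]) auto
    then have "continuous_on {0..t} (\<lambda>s. k s *\<^sub>R B (max 0 s) \<omega>)"
      by (intro continuous_intros continuous_on_subset[OF k]) auto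
    then have integrable: "set_integrable lborel {0..t} (\<lambda>s. k s *\<^sub>R B (max 0 s) \<omega>)"
      unfolding set_integrable_def by (rule borel_integrable_compact[OF compact_Icc])
    have "F \<omega> = integral {0..t} (\<lambda>s. k s *\<^sub>R B (max 0 s) \<omega>)"
      using set_borel_integral_eq_integral(2)[OF integrable] unfolding F_def set_lebesgue_integral_def by simp
    also have "\<dots> = integral {0..t} (\<lambda>s. k s *\<^sub>R B s \<omega>)"
      by (rule integral_cong) auto
    finally show ?thesis .
  qed
  ultimately show ?thesis
    by (rule measurable_cong[THEN iffD1, rotated])
qed

lemma borel_measurable_ou_integral:
  fixes B :: "real \<Rightarrow> 'a \<Rightarrow> real ^ 'n"
  assumes "\<And>t. t \<ge> 0 \<Longrightarrow> B t \<in> borel_measurable M"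
    and "\<And>\<omega>. \<omega> \<in> space M \<Longrightarrow> continuous_on {0..} (\<lambda>t. B t \<omega>)"
    and "t \<ge> 0"
  shows "(\<lambda>\<omega>. ou_integral \<alpha> B t \<omega>) \<in> borel_measurable M"
proof -
  have [measurable]: "(\<lambda>\<omega>. integral {0..t} (\<lambda>s. exp (-\<alpha> * (t - s)) *\<^sub>R B s \<omega>)) \<in> borel_measurable M"
    using assms(1,2) by (rule borel_measurable_kernel_integral) (auto intro!: continuous_intros)
  have [measurable]: "B t \<in> borel_measurable M"
    using assms(1,3) .
  show ?thesis
    unfolding ou_integral_def by measurable
qed

lemma continuous_on_ou_integral:
  fixes B :: "real \<Rightarrow> 'a \<Rightarrow> real ^ 'n"
  assumes cont: "continuous_on {0..} (\<lambda>t. B t \<omega>)"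
  shows "continuous_on {0..T} (\<lambda>t. ou_integral \<alpha> B t \<omega>)"
proof -
  have cB: "continuous_on {0..T} (\<lambda>t. B t \<omega>)"
    by (rule continuous_on_subset[OF cont]) auto
  \<comment> \<open>pull the t-dependence of the kernel out of the integral\<close>
  have "ou_integral \<alpha> B t \<omega>
      = B t \<omega> - \<alpha> *\<^sub>R (exp (-\<alpha> * t) *\<^sub>R integral {0..t} (\<lambda>s. exp (\<alpha> * s) *\<^sub>R B s \<omega>))" for t
  proof -
    have "integral {0..t} (\<lambda>s. exp (-\<alpha> * (t - s)) *\<^sub>R B s \<omega>)
        = integral {0..t} (\<lambda>s. exp (-\<alpha> * t) *\<^sub>R (exp (\<alpha> * s) *\<^sub>R B s \<omega>))"
      by (rule integral_cong) (simp add: algebra_simps flip: exp_add)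
    then show ?thesis
      unfolding ou_integral_def by (simp only: integral_cmul)
  qed
  moreover have "continuous_on {0..T} (\<lambda>t. integral {0..t} (\<lambda>s. exp (\<alpha> * s) *\<^sub>R B s \<omega>))"
    using cB by (intro indefinite_integral_continuous_1 integrable_continuous_interval continuous_intros)
  ultimately show ?thesis
    using cB by (simp only:) (intro continuous_intros)
qed

lemma linear_integral_equation_solution:
  fixes Y b :: "real \<Rightarrow> 'b::banach"
  assumes t: "0 \<le> t" and cY: "continuous_on {0..t} Y" and cb: "continuous_on {0..t} b"
    and eq: "\<And>s. s \<in> {0..t} \<Longrightarrow> Y s = b s - \<alpha> *\<^sub>R integral {0..s} Y"
  shows "Y t = b t - \<alpha> *\<^sub>R integral {0..t} (\<lambda>s. exp (-\<alpha> * (t - s)) *\<^sub>R b s)"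
proof -
  define I where "I u = integral {0..u} Y" for u
  \<comment> \<open>integrating factor: the derivative of exp(\<alpha> u) I(u) is exp(\<alpha> u) b(u)\<close>
  have "((\<lambda>u. exp (\<alpha> * u) *\<^sub>R I u) has_vector_derivative exp (\<alpha> * u) *\<^sub>R b u) (at u within {0..t})"
    if u: "u \<in> {0..t}" for u
  proof -
    have "((\<lambda>u. exp (\<alpha> * u) *\<^sub>R I u) has_vector_derivative
        exp (\<alpha> * u) *\<^sub>R Y u + (exp (\<alpha> * u) * \<alpha>) *\<^sub>R I u) (at u within {0..t})"
      unfolding I_def
      by (intro has_vector_derivative_scaleR integral_has_vector_derivative[OF cY u])
        (auto intro!: derivative_eq_intros)
    moreover have "b u = Y u + \<alpha> *\<^sub>R I u"
      using eq[OF u] unfolding I_def by (simp add: algebra_simps)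
    ultimately show ?thesis by (simp add: scaleR_add_right)
  qed
  then have "((\<lambda>u. exp (\<alpha> * u) *\<^sub>R b u) has_integral exp (\<alpha> * t) *\<^sub>R I t) {0..t}"
    using fundamental_theorem_of_calculus[OF t] by (force simp: I_def)
  then have weighted: "integral {0..t} (\<lambda>s. exp (\<alpha> * s) *\<^sub>R b s) = exp (\<alpha> * t) *\<^sub>R I t"
    by (rule integral_unique)
  have "integral {0..t} (\<lambda>s. exp (-\<alpha> * (t - s)) *\<^sub>R b s)
      = integral {0..t} (\<lambda>s. exp (-\<alpha> * t) *\<^sub>R (exp (\<alpha> * s) *\<^sub>R b s))"
    by (rule integral_cong) (simp add: algebra_simps flip: exp_add)
  also have "\<dots> = exp (-\<alpha> * t) *\<^sub>R (exp (\<alpha> * t) *\<^sub>R I t)"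
    by (simp only: integral_cmul weighted)
  also have "\<dots> = I t"
    by (simp flip: exp_add)
  finally have "integral {0..t} (\<lambda>s. exp (-\<alpha> * (t - s)) *\<^sub>R b s) = I t" .
  then show ?thesis
    using eq[of t] t by (simp add: I_def)
qed

section \<open>Exit from the neighbourhood of a centre\<close>

lemma first_passage_time_gt_iff:
  fixes f :: "real \<Rightarrow> real"
  assumes f: "continuous_on {0..} f" and T: "0 \<le> T"
  shows "ereal T < Inf {ereal t | t. 0 \<le> t \<and> R \<le> f t} \<longleftrightarrow> (\<forall>t\<in>{0..T}. f t < R)"
proof
  assume gt: "ereal T < Inf {ereal t | t. 0 \<le> t \<and> R \<le> f t}"
  show "\<forall>t\<in>{0..T}. f t < R"
  proof (rule ballI, rule ccontr)
    fix t assume t: "t \<in> {0..T}" and "\<not> f t < R"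
    then have "Inf {ereal t | t. 0 \<le> t \<and> R \<le> f t} \<le> ereal t"
      by (intro Inf_lower) auto
    with gt have "ereal T < ereal t" by (rule order.strict_trans2)
    with t show False by simp
  qed
next
  assume below: "\<forall>t\<in>{0..T}. f t < R"
  then have "T \<in> {0..}" "R - f T > 0" using T by auto
  then obtain d where d: "d > 0" "\<And>s. s \<in> {0..} \<Longrightarrow> dist s T < d \<Longrightarrow> dist (f s) (f T) < R - f T"
    using f unfolding continuous_on_iff by blast
  have "T + d \<le> t" if "0 \<le> t" "R \<le> f t" for t
  proof (rule ccontr)
    assume "\<not> T + d \<le> t"
    moreover have "t \<notin> {0..T}" using below that by force
    ultimately have "dist (f t) (f T) < R - f T"
      using that by (intro d(2)) (auto simp: dist_real_def)
    then show False using that by (simp add: dist_real_def)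
  qed
  then have "ereal (T + d) \<le> Inf {ereal t | t. 0 \<le> t \<and> R \<le> f t}"
    by (auto intro!: Inf_greatest)
  then show "ereal T < Inf {ereal t | t. 0 \<le> t \<and> R \<le> f t}"
    using d(1) order_less_le_trans[of "ereal T" "ereal (T + d)"] by simp
qed

lemma all_less_iff_of_agree_until_passage:
  fixes f g :: "real \<Rightarrow> real"
  assumes f: "continuous_on {0..T} f"
    and agree: "\<And>t. t \<in> {0..T} \<Longrightarrow> (\<forall>s\<in>{0..<t}. f s \<le> R) \<Longrightarrow> f t = g t"
  shows "(\<forall>t\<in>{0..T}. f t < R) \<longleftrightarrow> (\<forall>t\<in>{0..T}. g t < R)"
proof
  assume less: "\<forall>t\<in>{0..T}. f t < R"
  show "\<forall>t\<in>{0..T}. g t < R"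
  proof
    fix t assume t: "t \<in> {0..T}"
    then have "f t = g t"
      using less by (intro agree) (auto intro: less_imp_le)
    moreover have "f t < R" using less t by blast
    ultimately show "g t < R" by simp
  qed
next
  assume g: "\<forall>t\<in>{0..T}. g t < R"
  show "\<forall>t\<in>{0..T}. f t < R"
  proof (rule ccontr)
    define S where "S = {t \<in> {0..T}. R \<le> f t}"
    assume "\<not> (\<forall>t\<in>{0..T}. f t < R)"
    then have "S \<noteq> {}" by (auto simp: S_def)
    moreover have bdd: "bdd_below S"
      by (auto simp: S_def intro: bdd_belowI[of _ 0])
    moreover have "closed S"
      unfolding S_def using f by (intro continuous_on_closed_Collect_le continuous_intros) auto
    ultimately have first: "Inf S \<in> S"
      by (rule closed_contains_Inf)
    have "f s \<le> R" if s: "s \<in> {0..<Inf S}" for s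
    proof (rule ccontr)
      assume "\<not> f s \<le> R"
      then have "s \<in> S" using s first by (auto simp: S_def)
      then have "Inf S \<le> s" by (rule cInf_lower[OF _ bdd])
      with s show False by simp
    qed
    then have "f (Inf S) = g (Inf S)"
      using first by (intro agree) (auto simp: S_def)
    moreover have "R \<le> f (Inf S)" "g (Inf S) < R"
      using first g by (simp_all add: S_def)
    ultimately show False
      by linarith
  qed
qed

lemma score_est_near_center:
  fixes x :: "nat \<Rightarrow> real ^ 'n"
  assumes gp: "general_position n x" and i: "i \<in> {1..n}"
    and near: "norm (y - x i) \<le> 0.15 * sqrt (real CARD('n))"
  shows "score_est \<alpha> \<rho> n x y = - (\<alpha> *\<^sub>R (y - x i))"
proof -
  let ?sd = "sqrt (real CARD('n))"
  have unique: "j = i" if j: "j \<in> {1..n}" "norm (y - x j) \<le> 0.15 * ?sd" for j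
  proof (rule ccontr)
    assume "j \<noteq> i"
    moreover have "\<forall>i\<in>{1..n}. \<forall>j\<in>{1..n}. i \<noteq> j \<longrightarrow> 0.4 * ?sd \<le> dist (x i) (x j)"
      using gp unfolding general_position_def by (rule conjunct1)
    ultimately have "0.4 * ?sd \<le> dist (x i) (x j)"
      using i j(1) by auto
    also have "\<dots> \<le> dist y (x i) + dist y (x j)"
      by (rule dist_triangle3)
    also have "\<dots> \<le> 0.3 * ?sd"
      using near j(2) by (simp add: dist_norm)
    finally show False
      by simp
  qed
  have "(SOME j. j \<in> {1..n} \<and> norm (y - x j) \<le> 0.15 * ?sd) = i"
    by (rule some_equality) (use i near in \<open>auto intro: unique\<close>)
  moreover have "\<exists>j\<in>{1..n}. norm (y - x j) \<le> 0.15 * ?sd"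
    using i near by blast
  ultimately show ?thesis
    unfolding score_est_def Let_def by (simp only: if_True)
qed

lemma path_eq_ou_until_exit:
  fixes X W :: "real \<Rightarrow> real ^ 'n" and x :: "nat \<Rightarrow> real ^ 'n"
  assumes gp: "general_position n x" and i: "i \<in> {1..n}"
    and cX: "continuous_on {0..} X" and cW: "continuous_on {0..} W"
    and sde: "\<And>t. 0 \<le> t \<Longrightarrow> X t = x i + integral {0..t} (\<lambda>s. score_est \<alpha> \<rho> n x (X s)) + sqrt 2 *\<^sub>R W t"
    and t: "0 \<le> t" and near: "\<And>s. s \<in> {0..<t} \<Longrightarrow> norm (X s - x i) \<le> 0.15 * sqrt (real CARD('n))"
  shows "X t - x i = sqrt 2 *\<^sub>R (W t - \<alpha> *\<^sub>R integral {0..t} (\<lambda>s. exp (-\<alpha> * (t - s)) *\<^sub>R W s))"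
proof -
  define Y where "Y s = X s - x i" for s
  have drift: "integral {0..s} (\<lambda>r. score_est \<alpha> \<rho> n x (X r)) = - (\<alpha> *\<^sub>R integral {0..s} Y)"
    if s: "s \<in> {0..t}" for s
  proof -
    have "integral {0..s} (\<lambda>r. score_est \<alpha> \<rho> n x (X r)) = integral {0..s} (\<lambda>r. - (\<alpha> *\<^sub>R Y r))"
    \<comment> \<open>the bound on the distance holds only on [0, t); the endpoint is a null set\<close>
    proof (rule integral_spike[of "{t}"])
      fix r assume "r \<in> {0..s} - {t}"
      then have "r \<in> {0..<t}" using s by auto
      then show "- (\<alpha> *\<^sub>R Y r) = score_est \<alpha> \<rho> n x (X r)"
        using score_est_near_center[OF gp i near] by (simp add: Y_def)
    qed simp
    then show ?thesis by simp
  qed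
  have "Y t = sqrt 2 *\<^sub>R W t - \<alpha> *\<^sub>R integral {0..t} (\<lambda>s. exp (-\<alpha> * (t - s)) *\<^sub>R sqrt 2 *\<^sub>R W s)"
  proof (rule linear_integral_equation_solution[OF t])
    show "continuous_on {0..t} Y" "continuous_on {0..t} (\<lambda>s. sqrt 2 *\<^sub>R W s)"
      unfolding Y_def by (auto intro!: continuous_intros continuous_on_subset[OF cX] continuous_on_subset[OF cW])
    show "Y s = sqrt 2 *\<^sub>R W s - \<alpha> *\<^sub>R integral {0..s} Y" if "s \<in> {0..t}" for s
      using sde[of s] drift[OF that] that by (simp add: Y_def algebra_simps)
  qed
  also have "integral {0..t} (\<lambda>s. exp (-\<alpha> * (t - s)) *\<^sub>R sqrt 2 *\<^sub>R W s)
      = sqrt 2 *\<^sub>R integral {0..t} (\<lambda>s. exp (-\<alpha> * (t - s)) *\<^sub>R W s)"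
    unfolding scaleR_left_commute[of "exp _" "sqrt 2"] by (rule integral_cmul)
  finally show ?thesis
    by (simp add: Y_def algebra_simps)
qed

lemma exit_time_gt_iff_ou_below:
  fixes X B :: "real \<Rightarrow> 'a \<Rightarrow> real ^ 'n" and x :: "nat \<Rightarrow> real ^ 'n"
  assumes gp: "general_position n x" and i: "i \<in> {1..n}"
    and cX: "continuous_on {0..} (\<lambda>t. X t \<omega>)" and cB: "continuous_on {0..} (\<lambda>t. B t \<omega>)"
    and sde: "\<forall>t\<ge>0. X t \<omega> = x i + integral {0..t} (\<lambda>s. score_est \<alpha> \<rho> n x (X s \<omega>)) + sqrt 2 *\<^sub>R B t \<omega>"
    and T: "0 \<le> T"
  shows "exit_time X (x i) \<omega> > ereal T \<longleftrightarrow>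
    (\<forall>t\<in>{0..T}. sqrt 2 * norm (ou_integral \<alpha> B t \<omega>) < 0.15 * sqrt (real CARD('n)))"
proof -
  let ?R = "0.15 * sqrt (real CARD('n))"
  have "exit_time X (x i) \<omega> > ereal T \<longleftrightarrow> (\<forall>t\<in>{0..T}. norm (X t \<omega> - x i) < ?R)"
    unfolding exit_time_def by (rule first_passage_time_gt_iff[OF _ T]) (intro continuous_intros cX)
  also have "\<dots> \<longleftrightarrow> (\<forall>t\<in>{0..T}. sqrt 2 * norm (ou_integral \<alpha> B t \<omega>) < ?R)"
  proof (rule all_less_iff_of_agree_until_passage)
    show "continuous_on {0..T} (\<lambda>t. norm (X t \<omega> - x i))"
      by (intro continuous_intros continuous_on_subset[OF cX]) auto
    fix t assume "t \<in> {0..T}" "\<forall>s\<in>{0..<t}. norm (X s \<omega> - x i) \<le> ?R"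
    then show "norm (X t \<omega> - x i) = sqrt 2 * norm (ou_integral \<alpha> B t \<omega>)"
      using path_eq_ou_until_exit[OF gp i cX cB, of \<alpha> \<rho> t] sde unfolding ou_integral_def by auto
  qed
  finally show ?thesis .
qed

lemma std_BMD:
  assumes "std_BM M B"
  shows "prob_space M" and "\<And>t. 0 \<le> t \<Longrightarrow> B t \<in> borel_measurable M"
    and "\<And>\<omega>. \<omega> \<in> space M \<Longrightarrow> continuous_on {0..} (\<lambda>t. B t \<omega>)"
  using assms unfolding std_BM_def by blast+

lemma sets_ou_integral_events:
  fixes B :: "real \<Rightarrow> 'a \<Rightarrow> real ^ 'n"
  assumes "std_BM M B"
  shows "{\<omega> \<in> space M. \<exists>t\<in>{0..T}. norm (ou_integral \<alpha> B t \<omega>) > r} \<in> sets M"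
    and "{\<omega> \<in> space M. \<forall>t\<in>{0..T}. a * norm (ou_integral \<alpha> B t \<omega>) < r} \<in> sets M"
proof -
  have meas: "(\<lambda>\<omega>. norm (ou_integral \<alpha> B t \<omega>)) \<in> borel_measurable M" if "t \<in> {0..T}" for t
    using that borel_measurable_ou_integral[OF std_BMD(2,3)[OF assms]] by auto
  have cont: "continuous_on {0..T} (\<lambda>t. norm (ou_integral \<alpha> B t \<omega>))" if "\<omega> \<in> space M" for \<omega>
    using that by (intro continuous_on_norm continuous_on_ou_integral std_BMD(3)[OF assms])
  show "{\<omega> \<in> space M. \<exists>t\<in>{0..T}. norm (ou_integral \<alpha> B t \<omega>) > r} \<in> sets M"
    using meas cont by (rule sets_Collect_exists_greater_continuous)
  show "{\<omega> \<in> space M. \<forall>t\<in>{0..T}. a * norm (ou_integral \<alpha> B t \<omega>) < r} \<in> sets M"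
    by (intro sets_Collect_forall_less_continuous compact_Icc)
      (auto intro!: borel_measurable_times borel_measurable_const meas continuous_on_mult_left cont)
qed

lemma sqrt_2_mult_less:
  fixes y s :: real
  assumes "0 < s" and "y \<le> 0.1 * s"
  shows "sqrt 2 * y < 0.15 * s"
proof -
  have "sqrt 2 < (3/2::real)"
    by (rule real_less_lsqrt) (auto simp: power2_eq_square)
  then have "sqrt 2 * (0.1 * s) < 0.15 * s"
    using assms(1) by simp
  moreover have "sqrt 2 * y \<le> sqrt 2 * (0.1 * s)"
    using assms(2) by (rule mult_left_mono) simp
  ultimately show ?thesis
    by linarith
qed

theorem mainTheorem6:
  fixes c K \<alpha>0 H T :: real
    and \<rho> :: "real \<Rightarrow> real"
    and M :: "'a measure"
    and B X :: "real \<Rightarrow> 'a \<Rightarrow> real ^ 'n"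
    and x :: "nat \<Rightarrow> real ^ 'n"
    and n i :: nat
  assumes c_pos: "c > 0" and K_pos: "K > 0" and alpha0: "\<alpha>0 \<ge> 1"
    and OU_bound: "\<forall>(M' :: 'a measure) (B' :: real \<Rightarrow> 'a \<Rightarrow> real ^ 'n) T' \<alpha>.
        std_BM M' B' \<and> real CARD('n) \<ge> K \<and> 0 < T' \<and> T' \<le> exp (c * real CARD('n) / 2) \<and> \<alpha> \<ge> \<alpha>0 \<longrightarrow>
        measure M' {\<omega> \<in> space M'. \<exists>t\<in>{0..T'}. norm (ou_integral \<alpha> B' t \<omega>) > 0.1 * sqrt (real CARD('n))}
          \<le> 3 * \<alpha> * exp (- c * real CARD('n))"
    and rho_range: "\<forall>r. 0 \<le> \<rho> r \<and> \<rho> r \<le> 1"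
    and rho_one: "\<forall>r\<le>4. \<rho> r = 1"
    and rho_zero: "\<forall>r\<ge>5. \<rho> r = 0"
    and rho_smooth: "\<forall>k r. ((deriv ^^ k) \<rho>) differentiable (at r)"
    and rho_deriv: "\<forall>r. \<bar>deriv \<rho> r\<bar> \<le> H"
    and BM: "std_BM M B"
    and gp: "general_position n x"
    and d_large: "real CARD('n) \<ge> K"
    and T_pos: "0 < T" and T_le: "T \<le> exp (c * real CARD('n) / 2)"
    and i_range: "i \<in> {1..n}"
    and X_cont: "\<forall>\<omega>\<in>space M. continuous_on {0..} (\<lambda>t. X t \<omega>)"
    and X_sde: "\<forall>\<omega>\<in>space M. \<forall>t\<ge>0.
        X t \<omega> = x i + integral {0..t} (\<lambda>s. score_est \<alpha>0 \<rho> n x (X s \<omega>)) + sqrt 2 *\<^sub>R B t \<omega>"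
  shows "measure M {\<omega> \<in> space M. exit_time X (x i) \<omega> > ereal T}
           \<ge> 1 - 3 * \<alpha>0 * exp (- c * real CARD('n))"
proof -
  let ?sd = "sqrt (real CARD('n))"
  interpret prob_space M
    by (rule std_BMD(1)[OF BM])
  define E where "E = {\<omega> \<in> space M. \<exists>t\<in>{0..T}. norm (ou_integral \<alpha>0 B t \<omega>) > 0.1 * ?sd}"
  define G where "G = {\<omega> \<in> space M. \<forall>t\<in>{0..T}. sqrt 2 * norm (ou_integral \<alpha>0 B t \<omega>) < 0.15 * ?sd}"
  have exit_event: "{\<omega> \<in> space M. exit_time X (x i) \<omega> > ereal T} = G"
    unfolding G_def
  proof (intro Collect_cong conj_cong refl)
    fix \<omega> assume "\<omega> \<in> space M"
    then show "exit_time X (x i) \<omega> > ereal T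
        \<longleftrightarrow> (\<forall>t\<in>{0..T}. sqrt 2 * norm (ou_integral \<alpha>0 B t \<omega>) < 0.15 * ?sd)"
      using X_cont std_BMD(3)[OF BM] X_sde T_pos by (intro exit_time_gt_iff_ou_below[OF gp i_range]) auto
  qed
  have "E \<in> events" "G \<in> events"
    unfolding E_def G_def by (rule sets_ou_integral_events[OF BM])+
  moreover have "space M - E \<subseteq> G"
  proof -
    have "0 < ?sd" by simp
    then show ?thesis
      unfolding E_def G_def by (blast intro: sqrt_2_mult_less leI)
  qed
  ultimately have "1 - prob E \<le> prob G"
    using prob_compl finite_measure_mono by metis
  moreover have "prob E \<le> 3 * \<alpha>0 * exp (- c * real CARD('n))"
    using OU_bound BM d_large T_pos T_le unfolding E_def by blast
  ultimately show ?thesis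
    using exit_event by simp
qed

end
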